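(* Let $M$ be a strong $r$-helix hypersurface in $E^n$ with unit normal vector field $N$ and space of helix directions $H(M)\subset\mathbb{R}^n$. Let $\alpha: I\subset\mathbb{R}\to M$ be a curve on $M$, and suppose there exists $d_j\in H(M)$ such that $d_j\notin T_pM$ for every $p=\alpha(t)$, $t\in I$. Let $\eta: M\to S^{n-1}$, $\eta(P)=N(P)$, be the Gauss transformation of $M$. Then the curve $\beta(t)=\eta(\alpha(t))=N|_{\alpha(t)}$ is not a geodesic curve on the unit hypersphere $S^{n-1}\subset E^n$.
   Context: $\langle\cdot,\cdot\rangle$ is the standard inner product on $E^n=\mathbb{R}^n$. For a hypersurface $M\subset\mathbb{R}^n$ with unit normal $N$, a vector $d$ is a helix direction of $M$ if the angle between $d$ and $T_pM$ is the same for all $p\in M$, equivalently $\langle N,d\rangle$ is constant on $M$. $H(M)$ is the set of helix directions; $M$ is a strong $r$-helix if $H(M)$ is an $r$-dimensional linear subspace of $\mathbb{R}^n$. A curve on $S^{n-1}$ is a geodesic of $S^{n-1}$ if its second derivative is normal to $S^{n-1}$ at each point. *)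

theory Defs
  imports "HOL-Analysis.Analysis"
begin

text \<open>Ambient space E^n is a Euclidean space 'a with DIM('a) = n.
  Tangent space of a set M at p: velocities at 0 of differentiable curves in M through p.\<close>
definition tangent_space :: "'a::euclidean_space set \<Rightarrow> 'a \<Rightarrow> 'a set" where
  "tangent_space M p = {v. \<exists>\<gamma> e. e > 0 \<and> (\<forall>t\<in>{-e<..<e}. \<gamma> t \<in> M) \<and> \<gamma> 0 = p \<and>
                            (\<gamma> has_vector_derivative v) (at 0)}"

definition hypersurface :: "'a::euclidean_space set \<Rightarrow> ('a \<Rightarrow> 'a) \<Rightarrow> bool" where
  "hypersurface M N \<longleftrightarrow> M \<noteq> {} \<and> N differentiable_on M \<and>
     (\<forall>p\<in>M. subspace (tangent_space M p) \<and> dim (tangent_space M p) = DIM('a) - 1 \<and>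
             norm (N p) = 1 \<and> (\<forall>v\<in>tangent_space M p. N p \<bullet> v = 0))"

definition helix_dirs :: "'a::euclidean_space set \<Rightarrow> ('a \<Rightarrow> 'a) \<Rightarrow> 'a set" where
  "helix_dirs M N = {d. \<exists>c. \<forall>p\<in>M. N p \<bullet> d = c}"

definition strong_helix :: "nat \<Rightarrow> 'a::euclidean_space set \<Rightarrow> ('a \<Rightarrow> 'a) \<Rightarrow> bool" where
  "strong_helix r M N \<longleftrightarrow> subspace (helix_dirs M N) \<and> dim (helix_dirs M N) = r"

text \<open>A (regular) geodesic of the unit sphere S^{n-1} on the parameter set I: the curve lies
  on the sphere, is twice differentiable with nonvanishing velocity, and its second
  derivative is normal to the sphere, i.e. orthogonal to T_q S^{n-1} = q^perp at q = beta t.\<close>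
definition sphere_geodesic :: "(real \<Rightarrow> 'a::euclidean_space) \<Rightarrow> real set \<Rightarrow> bool" where
  "sphere_geodesic \<beta> I \<longleftrightarrow> (\<forall>t\<in>I. \<beta> t \<in> sphere 0 1) \<and>
     (\<exists>\<beta>' \<beta>''. \<forall>t\<in>I. (\<beta> has_vector_derivative \<beta>' t) (at t) \<and> \<beta>' t \<noteq> 0 \<and>
        (\<beta>' has_vector_derivative \<beta>'' t) (at t) \<and>
        (\<forall>v. v \<bullet> \<beta> t = 0 \<longrightarrow> \<beta>'' t \<bullet> v = 0))"

end

theory Submission
  imports Defs
begin

text \<open>Since d is a helix direction, \<open>\<langle>\<beta>, d\<rangle>\<close> is a constant c along \<open>\<beta> = N \<circ> \<alpha>\<close>, and
  c \<noteq> 0 because the tangent space is exactly the hyperplane orthogonal to N and d is not tangent.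
  Differentiating twice gives \<open>\<langle>\<beta>'', d\<rangle> = 0\<close>. A geodesic of the sphere has \<open>\<beta>''\<close> parallel to
  \<open>\<beta>\<close>, so c \<noteq> 0 forces \<open>\<beta>'' = 0\<close>; but \<open>|\<beta>| = 1\<close> gives \<open>\<langle>\<beta>, \<beta>''\<rangle> = -|\<beta>'|\<^sup>2\<close>, so the
  velocity vanishes, which a regular geodesic forbids.\<close>

lemma has_real_derivative_inner:
  fixes f g :: "real \<Rightarrow> 'a::real_inner"
  assumes "(f has_vector_derivative f') (at t)" and "(g has_vector_derivative g') (at t)"
  shows "((\<lambda>s. f s \<bullet> g s) has_real_derivative (f t \<bullet> g' + f' \<bullet> g t)) (at t)"
proof -
  have "((\<lambda>s. f s \<bullet> g s) has_derivative (\<lambda>h. f t \<bullet> (h *\<^sub>R g') + (h *\<^sub>R f') \<bullet> g t)) (at t)"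
    using has_derivative_inner[OF assms[unfolded has_vector_derivative_def]] .
  then show ?thesis
    unfolding has_field_derivative_def
    by (rule has_derivative_eq_rhs) (auto simp: algebra_simps)
qed

lemma has_real_derivative_constant_on_open:
  fixes g :: "real \<Rightarrow> real"
  assumes "(g has_real_derivative D) (at t)" and "open I" and "t \<in> I" and "\<forall>s\<in>I. g s = k"
  shows "D = 0"
proof -
  have "((\<lambda>s. k) has_real_derivative D) (at t)"
    using has_field_derivative_transform_within_open[OF assms(1-3)] assms(4) by auto
  then show ?thesis
    using DERIV_const DERIV_unique by blast
qed

lemma has_vector_derivative_inner_constant_on_open:
  fixes \<beta> :: "real \<Rightarrow> 'a::real_inner"
  assumes "(\<beta> has_vector_derivative \<beta>') (at t)" and "open I" and "t \<in> I"
    and "\<forall>s\<in>I. \<beta> s \<bullet> d = c"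
  shows "\<beta>' \<bullet> d = 0"
  using has_real_derivative_constant_on_open[OF
      has_real_derivative_inner[OF assms(1) has_vector_derivative_const] assms(2-4)]
  by simp

lemma unit_curve_acceleration:
  fixes \<beta> :: "real \<Rightarrow> 'a::real_inner"
  assumes "open I" and "t \<in> I" and norm_one: "\<forall>s\<in>I. norm (\<beta> s) = 1"
    and velocity: "\<And>s. s \<in> I \<Longrightarrow> (\<beta> has_vector_derivative \<beta>' s) (at s)"
    and acceleration: "(\<beta>' has_vector_derivative \<beta>'') (at t)"
  shows "\<beta> t \<bullet> \<beta>'' = - (\<beta>' t \<bullet> \<beta>' t)"
proof -
  have "\<forall>s\<in>I. \<beta> s \<bullet> \<beta>' s = 0"
  proof
    fix s assume "s \<in> I"
    have "((\<lambda>s. \<beta> s \<bullet> \<beta> s) has_real_derivative (\<beta> s \<bullet> \<beta>' s + \<beta>' s \<bullet> \<beta> s)) (at s)"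
      using has_real_derivative_inner[OF velocity velocity] \<open>s \<in> I\<close> by blast
    moreover have "\<forall>s\<in>I. \<beta> s \<bullet> \<beta> s = 1"
      using norm_one by (simp add: dot_square_norm)
    ultimately have "\<beta> s \<bullet> \<beta>' s + \<beta>' s \<bullet> \<beta> s = 0"
      by (rule has_real_derivative_constant_on_open[OF _ \<open>open I\<close> \<open>s \<in> I\<close>])
    then show "\<beta> s \<bullet> \<beta>' s = 0"
      by (simp add: inner_commute)
  qed
  moreover have "((\<lambda>s. \<beta> s \<bullet> \<beta>' s) has_real_derivative (\<beta> t \<bullet> \<beta>'' + \<beta>' t \<bullet> \<beta>' t)) (at t)"
    using has_real_derivative_inner[OF velocity[OF \<open>t \<in> I\<close>] acceleration] .
  ultimately have "\<beta> t \<bullet> \<beta>'' + \<beta>' t \<bullet> \<beta>' t = 0"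
    using has_real_derivative_constant_on_open[OF _ \<open>open I\<close> \<open>t \<in> I\<close>] by blast
  then show ?thesis
    by simp
qed

lemma normal_to_hyperplane_eq_zero:
  fixes x b d :: "'a::real_inner"
  assumes normal: "\<forall>v. v \<bullet> b = 0 \<longrightarrow> x \<bullet> v = 0" and "x \<bullet> d = 0" and "b \<bullet> d \<noteq> 0"
  shows "x = 0"
proof -
  define v where "v = (b \<bullet> d) *\<^sub>R x - (x \<bullet> b) *\<^sub>R d"
  have "v \<bullet> b = 0"
    unfolding v_def by (simp add: inner_diff_left inner_commute[of d b])
  then have "x \<bullet> v = 0"
    using normal by blast
  then have "(b \<bullet> d) * (x \<bullet> x) = 0"
    using \<open>x \<bullet> d = 0\<close> unfolding v_def by (simp add: inner_diff_right)
  then show ?thesis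
    using \<open>b \<bullet> d \<noteq> 0\<close> by simp
qed

lemma hypersurface_tangent_space_eq:
  assumes "hypersurface M N" and "p \<in> M"
  shows "tangent_space M p = {x. N p \<bullet> x = 0}"
proof -
  have "subspace (tangent_space M p)" and "dim (tangent_space M p) = DIM('a) - 1"
    and "N p \<noteq> 0" and "tangent_space M p \<subseteq> {x. N p \<bullet> x = 0}"
    using assms unfolding hypersurface_def by auto
  then show ?thesis
    by (intro subspace_dim_equal subspace_hyperplane) (simp_all add: dim_hyperplane)
qed

lemma hypersurface_normal_inner_nonzero:
  assumes "hypersurface M N" and "p \<in> M" and "d \<notin> tangent_space M p"
  shows "N p \<bullet> d \<noteq> 0"
  using assms hypersurface_tangent_space_eq by blast

theorem theorem3p3:
  fixes M :: "'a::euclidean_space set" and N :: "'a \<Rightarrow> 'a"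
    and \<alpha> :: "real \<Rightarrow> 'a" and I :: "real set" and r :: nat and dj :: 'a
  assumes "DIM('a) \<ge> 2"
    and "hypersurface M N"
    and "strong_helix r M N"
    and "is_interval I" and "open I" and "I \<noteq> {}"
    and "\<alpha> ` I \<subseteq> M" and "\<alpha> differentiable_on I"
    and "dj \<in> helix_dirs M N"
    and "\<forall>t\<in>I. dj \<notin> tangent_space M (\<alpha> t)"
  shows "\<not> sphere_geodesic (\<lambda>t. N (\<alpha> t)) I"
proof
  define \<beta> where "\<beta> = (\<lambda>t. N (\<alpha> t))"
  assume "sphere_geodesic (\<lambda>t. N (\<alpha> t)) I"
  then have sphere: "\<forall>t\<in>I. norm (\<beta> t) = 1"
    and "\<exists>\<beta>' \<beta>''. \<forall>t\<in>I. (\<beta> has_vector_derivative \<beta>' t) (at t) \<and> \<beta>' t \<noteq> 0 \<and>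
        (\<beta>' has_vector_derivative \<beta>'' t) (at t) \<and> (\<forall>v. v \<bullet> \<beta> t = 0 \<longrightarrow> \<beta>'' t \<bullet> v = 0)"
    unfolding sphere_geodesic_def \<beta>_def by auto
  then obtain \<beta>' \<beta>'' where geodesic: "\<And>t. t \<in> I \<Longrightarrow>
      (\<beta> has_vector_derivative \<beta>' t) (at t) \<and> \<beta>' t \<noteq> 0 \<and>
      (\<beta>' has_vector_derivative \<beta>'' t) (at t) \<and> (\<forall>v. v \<bullet> \<beta> t = 0 \<longrightarrow> \<beta>'' t \<bullet> v = 0)"
    by blast
  obtain t0 where "t0 \<in> I"
    using \<open>I \<noteq> {}\<close> by blast
  obtain c where height: "\<forall>t\<in>I. \<beta> t \<bullet> dj = c"
    using \<open>dj \<in> helix_dirs M N\<close> \<open>\<alpha> ` I \<subseteq> M\<close> unfolding helix_dirs_def \<beta>_def by blast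
  have "\<beta> t0 \<bullet> dj \<noteq> 0"
    using hypersurface_normal_inner_nonzero assms(2,7,10) \<open>t0 \<in> I\<close> unfolding \<beta>_def by blast
  have "\<forall>t\<in>I. \<beta>' t \<bullet> dj = 0"
    using has_vector_derivative_inner_constant_on_open[OF _ \<open>open I\<close> _ height] geodesic by blast
  then have "\<beta>'' t0 \<bullet> dj = 0"
    using has_vector_derivative_inner_constant_on_open[OF _ \<open>open I\<close> \<open>t0 \<in> I\<close>] geodesic[OF \<open>t0 \<in> I\<close>]
    by blast
  then have "\<beta>'' t0 = 0"
    using normal_to_hyperplane_eq_zero geodesic[OF \<open>t0 \<in> I\<close>] \<open>\<beta> t0 \<bullet> dj \<noteq> 0\<close> by blast
  moreover have "\<beta> t0 \<bullet> \<beta>'' t0 = - (\<beta>' t0 \<bullet> \<beta>' t0)"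
    using unit_curve_acceleration[OF \<open>open I\<close> \<open>t0 \<in> I\<close> sphere] geodesic \<open>t0 \<in> I\<close> by blast
  ultimately show False
    using geodesic[OF \<open>t0 \<in> I\<close>] by simp
qed

end
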